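(* Let $N$ be a galled tree on $\mathcal{X}$ with at least two galls, let $\mathcal{G}$ be a finite set of genes, let $G:\mathcal{X}\to 2^{\mathcal{G}}$ be a genome assignment and let $k$ be a positive integer. Let $u_1$, $N_1$, $Q_1$ and the extension of $G$ to the leaves $q_1$ and $v_1$ be as in the context. Then $N$ admits a $(G,k)$-gene labelling if and only if each of $N_1$ and $Q_1$ admits a $(G,k)$-gene labelling (with respect to the extended genome assignment on their respective leaf sets).
   Context: A digraph is rooted if it has a vertex $\rho$ of indegree zero such that every vertex is reachable from $\rho$ by a directed path. A phylogenetic network on $\mathcal{X}$ is a rooted acyclic digraph whose root has outdegree at least two, in which every vertex $v$ of outdegree $1$ has indegree at least $2$, and whose set of outdegree-zero vertices (leaves) is $\mathcal{X}$. A galled tree is a phylogenetic network in which any two distinct cycles of the underlying undirected graph have disjoint vertex sets (each such cycle is a gall). A genome assignment is any map from the leaf set to $2^{\mathcal{G}}$. A $(G,k)$-gene labelling of a network $M=(V,A)$ with leaf set $L$ is a map $F:V\to 2^{\mathcal{G}}$ with (I) $F(x)=G(x)$ for all $x\in L$; (II) $|F(v)|\le k$ for all $v\in V$; (III) for each $g\in\mathcal{G}$, the sub-digraph induced by $\{v\in V: g\in F(v)\}$ is rooted. Construction: $u_1$ is a vertex of $N$ such that, for some gall, every vertex of that gall is a descendant of $u_1$ (reachable from $u_1$ by a directed path), and no proper descendant of $u_1$ has this property. $N_1$ is obtained from $N$ by replacing $u_1$ together with all its descendants by a single new leaf $q_1$. $Q_1$ is obtained from $N$ by deleting all vertices that are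 not descendants of $u_1$ and adding a new root $r_1$ with exactly two children, $u_1$ and a new leaf $v_1$. Let $L_{Q_1}$ be the leaf set of $Q_1$, and set $G(q_1)=G(v_1)=\big(\bigcup_{x\in L_{Q_1}\setminus\{v_1\}}G(x)\big)\cap\big(\bigcup_{x\in\mathcal{X}\setminus L_{Q_1}}G(x)\big)$. *)

theory Defs
  imports Main
begin

definition indeg :: "('v \<times> 'v) set \<Rightarrow> 'v \<Rightarrow> nat" where
  "indeg A v = card {u. (u, v) \<in> A}"

definition outdeg :: "('v \<times> 'v) set \<Rightarrow> 'v \<Rightarrow> nat" where
  "outdeg A v = card {w. (v, w) \<in> A}"

definition digraph :: "'v set \<Rightarrow> ('v \<times> 'v) set \<Rightarrow> bool" where
  "digraph V A \<longleftrightarrow> finite V \<and> A \<subseteq> V \<times> V"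

definition rooted :: "'v set \<Rightarrow> ('v \<times> 'v) set \<Rightarrow> bool" where
  "rooted V A \<longleftrightarrow> A \<subseteq> V \<times> V \<and>
     (\<exists>\<rho>\<in>V. indeg A \<rho> = 0 \<and> (\<forall>v\<in>V. (\<rho>, v) \<in> A\<^sup>*))"

definition leaves :: "'v set \<Rightarrow> ('v \<times> 'v) set \<Rightarrow> 'v set" where
  "leaves V A = {v \<in> V. outdeg A v = 0}"

definition phylo_network :: "'v set \<Rightarrow> ('v \<times> 'v) set \<Rightarrow> 'v set \<Rightarrow> bool" where
  "phylo_network V A X \<longleftrightarrow> digraph V A \<and> rooted V A \<and> acyclic A \<and>
     (\<forall>\<rho>\<in>V. indeg A \<rho> = 0 \<longrightarrow> outdeg A \<rho> \<ge> 2) \<and>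
     (\<forall>v\<in>V. outdeg A v = 1 \<longrightarrow> indeg A v \<ge> 2) \<and>
     X = leaves V A"

definition uadj :: "('v \<times> 'v) set \<Rightarrow> 'v \<Rightarrow> 'v \<Rightarrow> bool" where
  "uadj A x y \<longleftrightarrow> (x, y) \<in> A \<or> (y, x) \<in> A"

definition ucycle :: "('v \<times> 'v) set \<Rightarrow> 'v list \<Rightarrow> bool" where
  "ucycle A c \<longleftrightarrow> length c \<ge> 3 \<and> distinct c \<and>
     (\<forall>i < length c. uadj A (c ! i) (c ! ((i + 1) mod length c)))"

text \<open>The (undirected) edge set of a cycle; two cycles are the same cycle iff equal edge sets.\<close>
definition cycle_edges :: "'v list \<Rightarrow> 'v set set" where
  "cycle_edges c = {{c ! i, c ! ((i + 1) mod length c)} | i. i < length c}"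

definition galled_tree :: "'v set \<Rightarrow> ('v \<times> 'v) set \<Rightarrow> 'v set \<Rightarrow> bool" where
  "galled_tree V A X \<longleftrightarrow> phylo_network V A X \<and>
     (\<forall>c d. ucycle A c \<longrightarrow> ucycle A d \<longrightarrow> cycle_edges c \<noteq> cycle_edges d \<longrightarrow>
        set c \<inter> set d = {})"

definition two_galls :: "('v \<times> 'v) set \<Rightarrow> bool" where
  "two_galls A \<longleftrightarrow> (\<exists>c d. ucycle A c \<and> ucycle A d \<and> cycle_edges c \<noteq> cycle_edges d)"

definition desc :: "('v \<times> 'v) set \<Rightarrow> 'v \<Rightarrow> 'v set" where
  "desc A u = {w. (u, w) \<in> A\<^sup>*}"

definition covers_gall :: "('v \<times> 'v) set \<Rightarrow> 'v \<Rightarrow> bool" where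
  "covers_gall A u \<longleftrightarrow> (\<exists>c. ucycle A c \<and> set c \<subseteq> desc A u)"

definition lowest_gall_vertex :: "'v set \<Rightarrow> ('v \<times> 'v) set \<Rightarrow> 'v \<Rightarrow> bool" where
  "lowest_gall_vertex V A u \<longleftrightarrow> u \<in> V \<and> covers_gall A u \<and>
     (\<forall>w \<in> desc A u. w \<noteq> u \<longrightarrow> \<not> covers_gall A w)"

definition N1_verts :: "'v set \<Rightarrow> ('v \<times> 'v) set \<Rightarrow> 'v \<Rightarrow> 'v \<Rightarrow> 'v set" where
  "N1_verts V A u q = (V - desc A u) \<union> {q}"

definition N1_arcs :: "'v set \<Rightarrow> ('v \<times> 'v) set \<Rightarrow> 'v \<Rightarrow> 'v \<Rightarrow> ('v \<times> 'v) set" where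
  "N1_arcs V A u q = (A \<inter> ((V - desc A u) \<times> (V - desc A u))) \<union>
     {(p, q) | p. p \<in> V - desc A u \<and> (\<exists>d \<in> desc A u. (p, d) \<in> A)}"

definition Q1_verts :: "('v \<times> 'v) set \<Rightarrow> 'v \<Rightarrow> 'v \<Rightarrow> 'v \<Rightarrow> 'v set" where
  "Q1_verts A u r v = desc A u \<union> {r, v}"

definition Q1_arcs :: "('v \<times> 'v) set \<Rightarrow> 'v \<Rightarrow> 'v \<Rightarrow> 'v \<Rightarrow> ('v \<times> 'v) set" where
  "Q1_arcs A u r v = (A \<inter> (desc A u \<times> desc A u)) \<union> {(r, u), (r, v)}"

text \<open>(G,k)-gene labelling with gene set Gs. Condition (III) is required for every gene
  that actually occurs in the labelling.\<close>
definition gene_labelling ::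
  "'v set \<Rightarrow> ('v \<times> 'v) set \<Rightarrow> 'g set \<Rightarrow> ('v \<Rightarrow> 'g set) \<Rightarrow> nat \<Rightarrow> ('v \<Rightarrow> 'g set) \<Rightarrow> bool" where
  "gene_labelling V A Gs G k F \<longleftrightarrow>
     (\<forall>v\<in>V. F v \<subseteq> Gs) \<and>
     (\<forall>x\<in>leaves V A. F x = G x) \<and>
     (\<forall>v\<in>V. card (F v) \<le> k) \<and>
     (\<forall>g\<in>Gs. {v\<in>V. g \<in> F v} \<noteq> {} \<longrightarrow>
        rooted {v\<in>V. g \<in> F v} (A \<inter> ({v\<in>V. g \<in> F v} \<times> {v\<in>V. g \<in> F v})))"

definition admits_labelling ::
  "'v set \<Rightarrow> ('v \<times> 'v) set \<Rightarrow> 'g set \<Rightarrow> ('v \<Rightarrow> 'g set) \<Rightarrow> nat \<Rightarrow> bool" where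
  "admits_labelling V A Gs G k \<longleftrightarrow> (\<exists>F. gene_labelling V A Gs G k F)"

end

theory Submission
  imports Defs
begin

text \<open>
  Let \<open>D\<close> be the set of descendants of the lowest gall vertex \<open>u1\<close>. The key
  structural fact is that \<open>u1\<close> is the only entrance to \<open>D\<close>: every arc from outside into \<open>D\<close>
  ends at \<open>u1\<close>. We show first that \<open>u1\<close> lies on a gall \<open>C\<close> inside \<open>D\<close>, and then that an arc
  entering \<open>D\<close> elsewhere would close up a second cycle through \<open>u1\<close> sharing vertices with \<open>C\<close>,
  contradicting the galled-tree condition.

  Given a unique entrance, the decomposition is a statement about arbitrary finite acyclic
  digraphs. A labelling of \<open>N\<close> restricts to \<open>N\<^sub>1\<close> and \<open>Q\<^sub>1\<close> (the genes shared by leaves on both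
  sides of \<open>u1\<close> must pass through \<open>u1\<close>, so they fit on \<open>q1\<close>, \<open>r1\<close> and \<open>v1\<close>). Conversely,
  labellings of \<open>N\<^sub>1\<close> and \<open>Q\<^sub>1\<close> are glued along \<open>u1\<close>, distinguishing genes occurring only above,
  only below, or on both sides of \<open>u1\<close>.
\<close>

section \<open>Directed paths\<close>

definition dpath :: "('v \<times> 'v) set \<Rightarrow> 'v list \<Rightarrow> bool" where
  "dpath A xs \<longleftrightarrow> successively (\<lambda>x y. (x, y) \<in> A) xs"

lemma dpath_appendD: "dpath A (xs @ ys) \<Longrightarrow> dpath A xs \<and> dpath A ys"
  by (simp add: dpath_def successively_append_iff)

lemma dpath_ConsD: "dpath A (x # xs) \<Longrightarrow> dpath A xs"
  by (auto simp: dpath_def successively_Cons)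

lemma dpath_trancl: "dpath A xs \<Longrightarrow> i < j \<Longrightarrow> j < length xs \<Longrightarrow> (xs ! i, xs ! j) \<in> A\<^sup>+"
proof (induction j)
  case (Suc j)
  have "(xs ! j, xs ! Suc j) \<in> A"
    using Suc.prems successively_nth unfolding dpath_def by fast
  then show ?case
    using Suc by (cases "i = j") auto
qed simp

lemma dpath_snoc_trancl:
  assumes "dpath A (xs @ [y])" "z \<in> set xs"
  shows "(z, y) \<in> A\<^sup>+"
proof -
  obtain i where "i < length xs" "xs ! i = z"
    using assms(2) by (auto simp: in_set_conv_nth)
  then show ?thesis
    using dpath_trancl[OF assms(1), of i "length xs"] by (simp add: nth_append)
qed

lemma dpath_distinct:
  assumes "acyclic A" "dpath A xs"
  shows "distinct xs"
  unfolding distinct_conv_nth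
proof (intro allI impI)
  fix i j assume ij: "i < length xs" "j < length xs" "i \<noteq> j"
  have "(xs ! i, xs ! j) \<in> A\<^sup>+ \<or> (xs ! j, xs ! i) \<in> A\<^sup>+"
    using dpath_trancl[OF assms(2)] ij by (cases "i < j") auto
  then show "xs ! i \<noteq> xs ! j"
    using assms(1) unfolding acyclic_def by auto
qed

lemma dpath_reach:
  assumes "dpath A xs" "z \<in> set xs"
  shows "(hd xs, z) \<in> A\<^sup>* \<and> (z, last xs) \<in> A\<^sup>*"
proof -
  obtain i where i: "i < length xs" "z = xs ! i"
    using assms(2) by (auto simp: in_set_conv_nth)
  have reach: "(xs ! i, xs ! j) \<in> A\<^sup>*" if "i \<le> j" "j < length xs" for i j
    using dpath_trancl[OF assms(1)] that by (metis le_neq_implies_less rtrancl_eq_or_trancl)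
  have "xs \<noteq> []" using assms(2) by auto
  then show ?thesis
    using reach[of 0 i] reach[of i "length xs - 1"] i by (simp add: hd_conv_nth last_conv_nth)
qed

lemma rtrancl_dpath:
  "(x, y) \<in> A\<^sup>* \<Longrightarrow> \<exists>xs. dpath A xs \<and> xs \<noteq> [] \<and> hd xs = x \<and> last xs = y"
proof (induction rule: rtrancl_induct)
  case base
  then show ?case by (intro exI[of _ "[x]"]) (auto simp: dpath_def)
next
  case (step y z)
  then obtain xs where "dpath A xs" "xs \<noteq> []" "hd xs = x" "last xs = y" by blast
  then show ?case
    using step(2) by (intro exI[of _ "xs @ [z]"]) (auto simp: dpath_def successively_append_iff)
qed

lemma dpath_first_hit:
  assumes "dpath A L" "L \<noteq> []" "last L \<in> C"
  shows "\<exists>\<pi>. dpath A \<pi> \<and> \<pi> \<noteq> [] \<and> hd \<pi> = hd L \<and> last \<pi> \<in> C \<and>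
             set (butlast \<pi>) \<inter> C = {} \<and> set \<pi> \<subseteq> set L"
  using assms
proof (induction L)
  case (Cons a L)
  show ?case
  proof (cases "a \<in> C")
    case True
    then show ?thesis by (intro exI[of _ "[a]"]) (auto simp: dpath_def)
  next
    case False
    then have L: "L \<noteq> []" "dpath A L" "last L \<in> C"
      using Cons.prems dpath_ConsD[of A a L] by (cases L; simp)+
    then obtain \<pi> where \<pi>: "dpath A \<pi>" "\<pi> \<noteq> []" "hd \<pi> = hd L" "last \<pi> \<in> C"
      "set (butlast \<pi>) \<inter> C = {}" "set \<pi> \<subseteq> set L"
      using Cons.IH by blast
    have "(a, hd L) \<in> A"
      using Cons.prems(1) L(1) by (cases L) (auto simp: dpath_def)
    then have "dpath A (a # \<pi>)"
      using \<pi>(1-3) by (cases \<pi>) (auto simp: dpath_def)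
    then show ?thesis
      using \<pi> False by (intro exI[of _ "a # \<pi>"]) auto
  qed
qed simp

lemma reach_first_hit:
  assumes "(u, c) \<in> A\<^sup>*" "c \<in> C"
  obtains \<pi> where "dpath A \<pi>" "\<pi> \<noteq> []" "hd \<pi> = u" "last \<pi> \<in> C" "set \<pi> \<inter> C = {last \<pi>}"
    "\<forall>z\<in>set \<pi>. (u, z) \<in> A\<^sup>* \<and> (z, c) \<in> A\<^sup>*"
proof -
  obtain L where L: "dpath A L" "L \<noteq> []" "hd L = u" "last L = c"
    using rtrancl_dpath[OF assms(1)] by blast
  then obtain \<pi> where \<pi>: "dpath A \<pi>" "\<pi> \<noteq> []" "hd \<pi> = u" "last \<pi> \<in> C"
    "set (butlast \<pi>) \<inter> C = {}" "set \<pi> \<subseteq> set L"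
    using dpath_first_hit[of A L C] assms(2) by auto
  have "set \<pi> = insert (last \<pi>) (set (butlast \<pi>))"
    using \<pi>(2) by (metis append_butlast_last_id list.simps(15) rotate1.simps(2) set_rotate1)
  then have "set \<pi> \<inter> C = {last \<pi>}"
    using \<pi>(4,5) by auto
  moreover have "\<forall>z\<in>set \<pi>. (u, z) \<in> A\<^sup>* \<and> (z, c) \<in> A\<^sup>*"
    using dpath_reach[OF L(1)] \<pi>(6) L(3,4) by blast
  ultimately show thesis
    using that \<pi> by blast
qed

lemma dpath_last_exit:
  assumes "dpath A Q" "set Q \<inter> P \<noteq> {}" "last Q \<notin> P"
  shows "\<exists>a Q'. a \<in> P \<and> dpath A (a # Q' @ [last Q]) \<and> set Q' \<inter> P = {}"
  using assms
proof (induction Q)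
  case (Cons q Q)
  show ?case
  proof (cases "set Q \<inter> P = {}")
    case True
    then have "q \<in> P" "Q \<noteq> []"
      using Cons.prems by auto
    then show ?thesis
      using Cons.prems(1) True
      by (intro exI[of _ q] exI[of _ "butlast Q"]) (auto dest: in_set_butlastD)
  next
    case False
    then have "Q \<noteq> []" by auto
    moreover have "\<exists>a Q'. a \<in> P \<and> dpath A (a # Q' @ [last Q]) \<and> set Q' \<inter> P = {}"
      using Cons.IH dpath_ConsD[OF Cons.prems(1)] False Cons.prems(3) \<open>Q \<noteq> []\<close> by simp
    ultimately show ?thesis by simp
  qed
qed simp

section \<open>Cycles of the underlying undirected graph\<close>

lemma uadj_sym: "uadj A x y = uadj A y x"
  by (auto simp: uadj_def)

lemma dpath_uadj: "dpath A xs \<Longrightarrow> successively (uadj A) xs"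
  unfolding dpath_def by (erule successively_mono) (auto simp: uadj_def)

lemma successively_uadj_rev: "successively (uadj A) xs \<Longrightarrow> successively (uadj A) (rev xs)"
  by (simp add: uadj_sym)

lemma successively_glue:
  "successively P (xs @ [a]) \<Longrightarrow> successively P (a # ys) \<Longrightarrow> successively P (xs @ a # ys)"
  by (auto simp: successively_append_iff)

lemma ucycle_intro:
  assumes "successively (uadj A) (c @ [hd c])" "distinct c" "length c \<ge> 3"
  shows "ucycle A c"
  unfolding ucycle_def
proof (intro conjI allI impI)
  fix i assume i: "i < length c"
  have "Suc i < length (c @ [hd c])" using i by simp
  then have "uadj A ((c @ [hd c]) ! i) ((c @ [hd c]) ! Suc i)"
    using assms(1) successively_nth by blast
  moreover have "c \<noteq> []" using assms(3) by auto
  ultimately show "uadj A (c ! i) (c ! ((i + 1) mod length c))"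
    using i by (cases "Suc i = length c") (auto simp: nth_append hd_conv_nth)
qed (use assms in auto)

lemma ucycle_successively: "ucycle A c \<Longrightarrow> successively (uadj A) c"
  unfolding ucycle_def successively_conv_nth by (metis Suc_eq_plus1 Suc_lessD mod_less)

lemma ucycle_rotate:
  assumes "ucycle A c"
  shows "ucycle A (rotate n c)"
  unfolding ucycle_def
proof (intro conjI allI impI)
  let ?L = "length c"
  fix i assume i: "i < length (rotate n c)"
  have L: "?L > 0" using assms by (auto simp: ucycle_def)
  have "(n + (i + 1) mod ?L) mod ?L = ((n + i) mod ?L + 1) mod ?L"
    by (simp add: mod_add_right_eq mod_Suc_eq)
  moreover have "uadj A (c ! ((n + i) mod ?L)) (c ! (((n + i) mod ?L + 1) mod ?L))"
    using assms L by (auto simp: ucycle_def)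
  ultimately show "uadj A (rotate n c ! i) (rotate n c ! ((i + 1) mod length (rotate n c)))"
    using i L by (simp add: nth_rotate)
qed (use assms in \<open>auto simp: ucycle_def\<close>)

lemma cycle_path_between:
  assumes "ucycle A c" "x \<in> set c" "y \<in> set c" "x \<noteq> y"
  obtains seg where "successively (uadj A) (y # seg @ [x])" "distinct (y # seg @ [x])"
    "set seg \<subseteq> set c"
proof -
  obtain i where i: "i < length c" "c ! i = y"
    using assms(3) by (auto simp: in_set_conv_nth)
  define c' where "c' = rotate i c"
  have "c' ! 0 = c ! ((i + 0) mod length c)"
    unfolding c'_def using i by (intro nth_rotate) auto
  then have c': "ucycle A c'" "set c' = set c" "c' ! 0 = y"
    using ucycle_rotate[OF assms(1)] i by (auto simp: c'_def)
  have "x \<in> set c'" using assms(2) c'(2) by simp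
  then obtain j where j: "j < length c'" "c' ! j = x"
    by (auto simp: in_set_conv_nth)
  have "j \<noteq> 0" using j c'(3) assms(4) by (metis)
  define seg where "seg = drop 1 (take j c')"
  have split: "y # seg @ [x] = take (Suc j) c'"
    using \<open>j \<noteq> 0\<close> j c'(3) unfolding seg_def
    by (cases c'; cases j) (auto simp: take_Suc_conv_app_nth)
  show thesis
  proof (rule that[of seg])
    show "successively (uadj A) (y # seg @ [x])"
      unfolding split using ucycle_successively[OF c'(1)]
      by (metis append_take_drop_id successively_append_iff)
    show "distinct (y # seg @ [x])"
      unfolding split using c'(1) by (simp add: ucycle_def)
    show "set seg \<subseteq> set c"
      using c'(2) unfolding seg_def by (metis set_drop_subset set_take_subset subset_trans)
  qed
qed

definition galls_disjoint :: "('v \<times> 'v) set \<Rightarrow> bool" where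
  "galls_disjoint A \<longleftrightarrow> (\<forall>c d. ucycle A c \<longrightarrow> ucycle A d \<longrightarrow>
      cycle_edges c \<noteq> cycle_edges d \<longrightarrow> set c \<inter> set d = {})"

text \<open>In a galled digraph, a cycle using an edge with an endpoint off the gall \<open>c\<close> is a
  different gall, hence vertex-disjoint from \<open>c\<close>.\<close>
lemma foreign_edge_cycle_disjoint:
  assumes "galls_disjoint A" "ucycle A c" "ucycle A d" "Suc i < length d"
    "d ! i \<notin> set c \<or> d ! Suc i \<notin> set c"
  shows "set d \<inter> set c = {}"
proof -
  have "{d ! i, d ! Suc i} \<in> cycle_edges d"
    unfolding cycle_edges_def using assms(4) by (intro CollectI exI[of _ i]) auto
  moreover have "e \<subseteq> set c" if "e \<in> cycle_edges c" for e
    using that unfolding cycle_edges_def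
    by (auto intro!: nth_mem) (metis length_pos_if_in_set mod_less_divisor nth_mem)
  ultimately have "cycle_edges d \<noteq> cycle_edges c"
    using assms(5) by blast
  then show ?thesis
    using assms(1-3) unfolding galls_disjoint_def by blast
qed

section \<open>The lowest gall vertex of a galled tree\<close>

text \<open>The lowest vertex \<open>u\<close> covering a gall \<open>C\<close> lies on \<open>C\<close>. Otherwise take a shortest path
  from \<open>u\<close> into \<open>C\<close>, with second vertex \<open>h\<close>; since \<open>h\<close> does not cover \<open>C\<close>, a second shortest
  path from \<open>u\<close> into \<open>C\<close> avoids the descendants of \<open>h\<close>. Both paths, closed up along \<open>C\<close>,
  form a second gall through \<open>u \<notin> C\<close> that meets \<open>C\<close>.\<close>
lemma lowest_vertex_on_gall:
  assumes ac: "acyclic A" and galled: "galls_disjoint A"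
    and C: "ucycle A C" "set C \<subseteq> desc A u"
    and lowest: "\<forall>w\<in>desc A u. w \<noteq> u \<longrightarrow> \<not> covers_gall A w"
  shows "u \<in> set C"
proof (rule ccontr)
  assume uC: "u \<notin> set C"
  have "C \<noteq> []" using C(1) by (auto simp: ucycle_def)
  then have hdC: "hd C \<in> set C" by simp
  then have "(u, hd C) \<in> A\<^sup>*"
    using C(2) unfolding desc_def by auto
  then obtain \<pi>1 where \<pi>1: "dpath A \<pi>1" "\<pi>1 \<noteq> []" "hd \<pi>1 = u" "last \<pi>1 \<in> set C"
    "set \<pi>1 \<inter> set C = {last \<pi>1}" "\<forall>z\<in>set \<pi>1. (u, z) \<in> A\<^sup>* \<and> (z, hd C) \<in> A\<^sup>*"
    using hdC by (rule reach_first_hit)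
  define x where "x = last \<pi>1"
  obtain t1 where t1: "\<pi>1 = u # t1" "t1 \<noteq> []"
    using \<pi>1(2-4) uC by (cases \<pi>1) (auto split: if_splits)
  define h where "h = hd t1"
  have uh: "(u, h) \<in> A"
    using \<pi>1(1) t1 unfolding h_def by (cases t1) (auto simp: dpath_def)
  then have "h \<in> desc A u" "h \<noteq> u"
    using ac unfolding desc_def acyclic_def by auto
  then obtain c where c: "c \<in> set C" "c \<notin> desc A h"
    using lowest C(1) unfolding covers_gall_def by blast
  have "(u, c) \<in> A\<^sup>*" using C(2) c(1) unfolding desc_def by auto
  then obtain \<pi>2 where \<pi>2: "dpath A \<pi>2" "\<pi>2 \<noteq> []" "hd \<pi>2 = u" "last \<pi>2 \<in> set C"
    "set \<pi>2 \<inter> set C = {last \<pi>2}" "\<forall>z\<in>set \<pi>2. (u, z) \<in> A\<^sup>* \<and> (z, c) \<in> A\<^sup>*"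
    using c(1) by (rule reach_first_hit)
  define y where "y = last \<pi>2"
  have dt1: "dpath A t1" using \<pi>1(1) t1(1) dpath_ConsD by metis
  have t1_below_h: "set t1 \<subseteq> desc A h"
    using dpath_reach[OF dt1] unfolding h_def desc_def by auto
  have \<pi>2_off_h: "set \<pi>2 \<inter> desc A h = {}"
    using \<pi>2(6) c(2) unfolding desc_def by (auto dest: rtrancl_trans)
  have "x \<in> set t1" "last t1 = x" using t1 unfolding x_def by auto
  moreover have "y \<in> set \<pi>2" unfolding y_def using \<pi>2(2) by simp
  ultimately have "x \<noteq> y" using t1_below_h \<pi>2_off_h by blast
  then obtain seg where seg: "successively (uadj A) (y # seg @ [x])"
    "distinct (y # seg @ [x])" "set seg \<subseteq> set C"
    using cycle_path_between[OF C(1)] \<pi>1(4) \<pi>2(4) unfolding x_def y_def by metis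
  define D where "D = rev t1 @ \<pi>2 @ seg"
  have hdD: "hd D = x" using \<open>last t1 = x\<close> t1(2) by (simp add: D_def hd_rev)
  have "successively (uadj A) (rev t1 @ \<pi>2)"
    using uh \<pi>2(2,3) t1(2) successively_uadj_rev[OF dpath_uadj[OF dt1]] dpath_uadj[OF \<pi>2(1)]
    by (cases \<pi>2) (auto simp: successively_append_iff last_rev h_def uadj_def)
  moreover have \<pi>2_split: "\<pi>2 = butlast \<pi>2 @ [y]"
    using \<pi>2(2) unfolding y_def by simp
  ultimately have "successively (uadj A) ((rev t1 @ butlast \<pi>2) @ y # seg @ [x])"
    using successively_glue seg(1) by (metis append.assoc)
  moreover have "D @ [hd D] = (rev t1 @ butlast \<pi>2) @ y # seg @ [x]"
    unfolding hdD unfolding D_def by (subst \<pi>2_split) simp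
  ultimately have walk: "successively (uadj A) (D @ [hd D])"
    by (simp only:)
  have "distinct \<pi>1" "distinct \<pi>2"
    using dpath_distinct ac \<pi>1(1) \<pi>2(1) by blast+
  moreover have "set t1 \<inter> set seg = {}"
    using \<pi>1(5)[folded x_def] seg(2,3) t1(1) by fastforce
  moreover have "set \<pi>2 \<inter> set seg = {}"
    using \<pi>2(5)[folded y_def] seg(2,3) by fastforce
  ultimately have "distinct D"
    using t1_below_h \<pi>2_off_h seg(2) t1(1) unfolding D_def by auto
  moreover have "length \<pi>2 \<ge> 2"
    using \<pi>2(2-4) uC by (cases \<pi>2) (auto split: if_splits simp: Suc_le_eq)
  ultimately have "length D \<ge> 3"
    using t1(2) unfolding D_def by (cases t1) auto
  then have cycle: "ucycle A D"
    using ucycle_intro walk \<open>distinct D\<close> by blast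
  have "D ! length t1 = u" "Suc (length t1) < length D"
    using \<pi>2(2,3) \<open>length \<pi>2 \<ge> 2\<close> unfolding D_def by (auto simp: nth_append hd_conv_nth)
  then have "set D \<inter> set C = {}"
    using foreign_edge_cycle_disjoint[OF galled C(1) cycle] uC by auto
  moreover have "x \<in> set D" using hdD t1(2) unfolding D_def by (metis hd_in_set Nil_is_append_conv rev_is_Nil_conv)
  ultimately show False using \<pi>1(4) unfolding x_def by blast
qed

text \<open>An arc \<open>p \<rightarrow> w\<close> from outside into the descendants with \<open>w \<noteq> u\<close>
  closes a second gall through \<open>u\<close>: down from \<open>u\<close> to \<open>w\<close>, up from \<open>p\<close> to a common
  ancestor \<open>a\<close> of \<open>p\<close> and \<open>u\<close>, and down again to \<open>u\<close>; it uses the edge \<open>{w, p}\<close> off the gall.\<close>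
lemma gall_top_unique_entry:
  assumes ac: "acyclic A" and galled: "galls_disjoint A"
    and C: "ucycle A C" "u \<in> set C" "set C \<subseteq> desc A u"
    and anc: "(\<rho>, p) \<in> A\<^sup>*" "(\<rho>, u) \<in> A\<^sup>*"
    and pw: "(p, w) \<in> A" "p \<notin> desc A u" "w \<in> desc A u"
  shows "w = u"
proof (rule ccontr)
  assume "w \<noteq> u"
  obtain \<pi> where \<pi>: "dpath A \<pi>" "\<pi> \<noteq> []" "hd \<pi> = u" "last \<pi> = w"
    using rtrancl_dpath[of u w A] pw(3) unfolding desc_def by blast
  have \<pi>_below: "set \<pi> \<subseteq> desc A u"
    using dpath_reach[OF \<pi>(1)] \<pi>(3) unfolding desc_def by auto
  have "length \<pi> \<ge> 2"
    using \<pi>(2-4) \<open>w \<noteq> u\<close> by (cases \<pi>) (auto split: if_splits simp: Suc_le_eq)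
  obtain P where P: "dpath A P" "P \<noteq> []" "hd P = \<rho>" "last P = p"
    using rtrancl_dpath[OF anc(1)] by blast
  obtain Q where Q: "dpath A Q" "Q \<noteq> []" "hd Q = \<rho>" "last Q = u"
    using rtrancl_dpath[OF anc(2)] by blast
  have P_above: "set P \<inter> desc A u = {}"
    using dpath_reach[OF P(1)] P(4) pw(2) unfolding desc_def by (auto dest: rtrancl_trans)
  have "set Q \<inter> set P \<noteq> {}"
    using P(2,3) Q(2,3) by (metis disjoint_iff hd_in_set)
  moreover have "last Q \<notin> set P"
    using P_above Q(4) unfolding desc_def by auto
  ultimately obtain a Q' where a: "a \<in> set P" "dpath A (a # Q' @ [u])" "set Q' \<inter> set P = {}"
    using dpath_last_exit[OF Q(1)] Q(4) by metis
  obtain P1 P' where P_split: "P = P1 @ a # P'"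
    using split_list[OF a(1)] by blast
  have up: "dpath A (a # P')" "last (a # P') = p"
    using P(1,4) P_split dpath_appendD by auto
  define D where "D = \<pi> @ rev (a # P') @ Q'"
  have "uadj A (last \<pi>) (hd (rev (a # P')))"
    using pw(1) \<pi>(4) up(2) by (simp only: hd_rev uadj_def) simp
  then have "successively (uadj A) (\<pi> @ rev (a # P'))"
    unfolding successively_append_iff
    using dpath_uadj[OF \<pi>(1)] successively_uadj_rev[OF dpath_uadj[OF up(1)]] by blast
  then have "successively (uadj A) ((\<pi> @ rev P') @ [a])"
    by simp
  then have "successively (uadj A) ((\<pi> @ rev P') @ a # Q' @ [u])"
    by (rule successively_glue[OF _ dpath_uadj[OF a(2)]])
  moreover have "D @ [hd D] = (\<pi> @ rev P') @ a # Q' @ [u]"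
    using \<pi>(2,3) unfolding D_def by simp
  ultimately have walk: "successively (uadj A) (D @ [hd D])"
    by (simp only:)
  have dist: "distinct \<pi>" "distinct P" "distinct (a # Q' @ [u])"
    using dpath_distinct[OF ac] \<pi>(1) P(1) a(2) by blast+
  then have "distinct (a # P')"
    using P_split by simp
  moreover have "set Q' \<inter> desc A u = {}"
  proof -
    have "(z, u) \<in> A\<^sup>+" if "z \<in> set Q'" for z
      using dpath_snoc_trancl[of A "a # Q'" u z] a(2) that by simp
    then show ?thesis
      using ac unfolding desc_def acyclic_def by (auto dest: rtrancl_trancl_trancl)
  qed
  ultimately have "distinct D"
    using dist \<pi>_below P_above a(3) P_split unfolding D_def by auto
  moreover have "length D \<ge> 3"
    using \<open>length \<pi> \<ge> 2\<close> unfolding D_def by simp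
  ultimately have cycle: "ucycle A D"
    using ucycle_intro walk by blast
  have "D ! Suc (length \<pi> - 1) = p" "Suc (length \<pi> - 1) < length D"
    using \<open>length \<pi> \<ge> 2\<close> up(2) unfolding D_def by (auto simp: nth_append hd_rev[symmetric] hd_conv_nth)
  then have "set D \<inter> set C = {}"
    using foreign_edge_cycle_disjoint[OF galled C(1) cycle] C(3) pw(2) by blast
  moreover have "u \<in> set D"
    using \<pi>(2,3) unfolding D_def by auto
  ultimately show False
    using C(2) by blast
qed

lemma lowest_gall_vertex_unique_entry:
  assumes N: "galled_tree V A X" and u: "lowest_gall_vertex V A u"
    and pw: "(p, w) \<in> A" "p \<notin> desc A u" "w \<in> desc A u"
  shows "w = u"
proof -
  have ac: "acyclic A" and AV: "A \<subseteq> V \<times> V" and "rooted V A"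
    and galled: "galls_disjoint A"
    using N unfolding galled_tree_def phylo_network_def digraph_def galls_disjoint_def by blast+
  then obtain \<rho> where \<rho>: "\<forall>v\<in>V. (\<rho>, v) \<in> A\<^sup>*"
    unfolding rooted_def by blast
  obtain C where C: "ucycle A C" "set C \<subseteq> desc A u"
    using u unfolding lowest_gall_vertex_def covers_gall_def by blast
  have "u \<in> set C"
    using lowest_vertex_on_gall[OF ac galled C] u unfolding lowest_gall_vertex_def by blast
  moreover have "(\<rho>, p) \<in> A\<^sup>*" "(\<rho>, u) \<in> A\<^sup>*"
    using \<rho> pw(1) AV u unfolding lowest_gall_vertex_def by blast+
  ultimately show ?thesis
    using gall_top_unique_entry[OF ac galled C(1) _ C(2) _ _ pw] by blast
qed

definition carriers :: "'v set \<Rightarrow> ('v \<Rightarrow> 'g set) \<Rightarrow> 'g \<Rightarrow> 'v set" where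
  "carriers U F g = {v \<in> U. g \<in> F v}"

definition induced_root :: "'v set \<Rightarrow> ('v \<times> 'v) set \<Rightarrow> 'v \<Rightarrow> bool" where
  "induced_root W R \<rho> \<longleftrightarrow>
     \<rho> \<in> W \<and> (\<forall>x. (x, \<rho>) \<notin> R \<inter> W \<times> W) \<and> (\<forall>v\<in>W. (\<rho>, v) \<in> (R \<inter> W \<times> W)\<^sup>*)"

lemma rooted_induced_iff:
  assumes "finite W"
  shows "rooted W (R \<inter> W \<times> W) \<longleftrightarrow> (\<exists>\<rho>. induced_root W R \<rho>)"
proof -
  have "indeg (R \<inter> W \<times> W) \<rho> = 0 \<longleftrightarrow> (\<forall>x. (x, \<rho>) \<notin> R \<inter> W \<times> W)" for \<rho>
  proof -
    have "finite {x. (x, \<rho>) \<in> R \<inter> W \<times> W}"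
      using assms by (rule finite_subset[rotated]) auto
    then show ?thesis
      unfolding indeg_def by simp
  qed
  then show ?thesis
    unfolding rooted_def induced_root_def by blast
qed

lemma outdeg_zero_iff:
  assumes "finite V" "A \<subseteq> V \<times> V"
  shows "outdeg A v = 0 \<longleftrightarrow> (\<forall>w. (v, w) \<notin> A)"
proof -
  have "finite {w. (v, w) \<in> A}"
    using assms(1) by (rule finite_subset[rotated]) (use assms(2) in auto)
  then show ?thesis
    unfolding outdeg_def by simp
qed

lemma gene_labelling_iff:
  assumes "finite V"
  shows "gene_labelling V A Gs G k F \<longleftrightarrow>
    (\<forall>v\<in>V. F v \<subseteq> Gs) \<and> (\<forall>x\<in>leaves V A. F x = G x) \<and> (\<forall>v\<in>V. card (F v) \<le> k) \<and>
    (\<forall>g\<in>Gs. carriers V F g \<noteq> {} \<longrightarrow> (\<exists>\<rho>. induced_root (carriers V F g) A \<rho>))"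
proof -
  have "rooted (carriers V F g) (A \<inter> carriers V F g \<times> carriers V F g) \<longleftrightarrow>
      (\<exists>\<rho>. induced_root (carriers V F g) A \<rho>)" for g
    using assms by (intro rooted_induced_iff) (simp add: carriers_def)
  then show ?thesis
    unfolding gene_labelling_def carriers_def by simp
qed

lemma labelling_root:
  assumes "gene_labelling U R Gs H k F" "finite U" "g \<in> Gs" "v \<in> carriers U F g"
  obtains \<rho> where "induced_root (carriers U F g) R \<rho>"
  using assms gene_labelling_iff[of U R Gs H k F] by blast

lemma leaf_carrier:
  assumes "gene_labelling U R Gs H k F" "x \<in> leaves U R" "g \<in> H x"
  shows "x \<in> carriers U F g"
  using assms unfolding gene_labelling_def carriers_def leaves_def by auto

lemma induced_rtrancl_source: "(z, v) \<in> (R \<inter> W \<times> W)\<^sup>* \<Longrightarrow> v \<in> W \<Longrightarrow> z \<in> W"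
  by (induction rule: converse_rtrancl_induct) auto

lemma rtrancl_restrict_ancestors:
  assumes "(x, y) \<in> R\<^sup>*" "\<And>z. (z, y) \<in> R\<^sup>* \<Longrightarrow> z \<in> S"
  shows "(x, y) \<in> (R \<inter> S \<times> S)\<^sup>*"
  using assms
proof (induction rule: converse_rtrancl_induct)
  case (step x x')
  then have "x \<in> S" "x' \<in> S"
    by (blast intro: converse_rtrancl_into_rtrancl)+
  with step show ?case
    by (blast intro: converse_rtrancl_into_rtrancl)
qed simp

lemma rtrancl_restrict_closed:
  assumes "(x, y) \<in> R\<^sup>*" "x \<in> S" "\<And>a b. (a, b) \<in> R \<Longrightarrow> a \<in> S \<Longrightarrow> b \<in> S"
  shows "(x, y) \<in> (R \<inter> S \<times> S)\<^sup>* \<and> y \<in> S"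
  using assms(1)
proof (induction rule: rtrancl_induct)
  case (step y z)
  then have "z \<in> S" using assms(3) by blast
  with step show ?case
    by (blast intro: rtrancl_into_rtrancl)
qed (simp add: assms(2))

lemma rtrancl_crossing_arc:
  assumes "(x, y) \<in> R\<^sup>*" "x \<notin> S" "y \<in> S"
  shows "\<exists>a b. (x, a) \<in> R\<^sup>* \<and> (a, b) \<in> R \<and> a \<notin> S \<and> b \<in> S \<and> (b, y) \<in> R\<^sup>*"
  using assms
proof (induction rule: rtrancl_induct)
  case (step y z)
  then show ?case
    by (cases "y \<in> S") (blast intro: rtrancl_into_rtrancl)+
qed simp

lemma path_through_entrance:
  assumes "(x, z) \<in> R\<^sup>*" "x \<notin> D" "z \<in> D"
    and entrance: "\<And>a b. (a, b) \<in> R \<Longrightarrow> a \<notin> D \<Longrightarrow> b \<in> D \<Longrightarrow> b = e"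
    and closed: "\<And>a b. (a, b) \<in> R \<Longrightarrow> a \<in> D \<Longrightarrow> b \<in> D"
  shows "\<exists>a. (x, a) \<in> R\<^sup>* \<and> (a, e) \<in> R \<and> a \<notin> D \<and> (e, z) \<in> (R \<inter> D \<times> D)\<^sup>*"
proof -
  obtain a b where ab: "(x, a) \<in> R\<^sup>*" "(a, b) \<in> R" "a \<notin> D" "b \<in> D" "(b, z) \<in> R\<^sup>*"
    using rtrancl_crossing_arc[OF assms(1-3)] by blast
  moreover have "b = e"
    using entrance ab(2-4) by blast
  ultimately show ?thesis
    using rtrancl_restrict_closed[of b z R D] closed by blast
qed

section \<open>Splitting a network at a vertex with a unique entrance\<close>

locale entry_split =
  fixes V :: "'v set" and A :: "('v \<times> 'v) set" and X :: "'v set" and u1 q1 r1 v1 :: 'v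
  assumes finite_V: "finite V" and arcs_V: "A \<subseteq> V \<times> V" and acyclic_A: "acyclic A"
    and leaves_X: "X = leaves V A" and u1_V: "u1 \<in> V"
    and unique_entry: "\<And>p w. (p, w) \<in> A \<Longrightarrow> p \<notin> desc A u1 \<Longrightarrow> w \<in> desc A u1 \<Longrightarrow> w = u1"
    and fresh: "q1 \<notin> V" "r1 \<notin> V" "v1 \<notin> V" "r1 \<noteq> v1"
begin

abbreviation "D \<equiv> desc A u1"
abbreviation "VN \<equiv> N1_verts V A u1 q1"
abbreviation "AN \<equiv> N1_arcs V A u1 q1"
abbreviation "VQ \<equiv> Q1_verts A u1 r1 v1"
abbreviation "AQ \<equiv> Q1_arcs A u1 r1 v1"

lemma u1_D: "u1 \<in> D"
  unfolding desc_def by simp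

lemma D_closed: "(a, b) \<in> A\<^sup>* \<Longrightarrow> a \<in> D \<Longrightarrow> b \<in> D"
  unfolding desc_def by (meson mem_Collect_eq rtrancl_trans)

lemma D_arc_closed: "(a, b) \<in> A \<Longrightarrow> a \<in> D \<Longrightarrow> b \<in> D"
  using D_closed by blast

lemma D_V: "D \<subseteq> V"
proof
  fix z assume "z \<in> D"
  then have "(u1, z) \<in> A\<^sup>*" unfolding desc_def by simp
  then show "z \<in> V" using u1_V arcs_V by (induction rule: rtrancl_induct) auto
qed

lemma no_arc_to_u1_from_D: "(a, u1) \<in> A \<Longrightarrow> a \<notin> D"
  using acyclic_A unfolding desc_def acyclic_def by (meson mem_Collect_eq rtrancl_into_trancl1)

lemma X_V: "X \<subseteq> V"
  using leaves_X unfolding leaves_def by auto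

lemma X_iff: "x \<in> X \<longleftrightarrow> x \<in> V \<and> (\<forall>w. (x, w) \<notin> A)"
  using leaves_X outdeg_zero_iff[OF finite_V arcs_V] unfolding leaves_def by auto

lemma AN_iff:
  "(a, b) \<in> AN \<longleftrightarrow> a \<in> V - D \<and> ((b \<in> V - D \<and> (a, b) \<in> A) \<or> (b = q1 \<and> (a, u1) \<in> A))"
  unfolding N1_arcs_def using unique_entry u1_D by blast

lemma AQ_iff: "(a, b) \<in> AQ \<longleftrightarrow> (a \<in> D \<and> (a, b) \<in> A) \<or> (a = r1 \<and> (b = u1 \<or> b = v1))"
  unfolding Q1_arcs_def using D_closed by blast

lemma AQ_from_D:
  assumes "(a, b) \<in> AQ" "a \<in> D"
  shows "(a, b) \<in> A \<and> b \<in> D"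
proof -
  have "a \<noteq> r1" using assms(2) D_V fresh(2) by blast
  then have "(a, b) \<in> A" using assms(1) AQ_iff by blast
  then show ?thesis using assms(2) D_closed by blast
qed

lemma AN_restrict_above: "S \<subseteq> V - D \<Longrightarrow> AN \<inter> S \<times> S = A \<inter> S \<times> S"
  using AN_iff fresh(1) arcs_V by blast

lemma AQ_restrict_below: "S \<subseteq> D \<Longrightarrow> AQ \<inter> S \<times> S = A \<inter> S \<times> S"
  using AQ_iff D_V fresh(2) by blast

lemma finite_VN: "finite VN"
  using finite_V unfolding N1_verts_def by simp

lemma finite_VQ: "finite VQ"
  using finite_V D_V finite_subset unfolding Q1_verts_def by auto

lemma leaves_N1: "leaves VN AN = insert q1 (X - D)"
proof -
  have AN_VN: "AN \<subseteq> VN \<times> VN"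
    using AN_iff arcs_V unfolding N1_verts_def by auto
  have no_out: "(\<forall>w. (v, w) \<notin> AN) \<longleftrightarrow> (\<forall>w. (v, w) \<notin> A)" if v: "v \<in> V - D" for v
  proof
    assume no_AN: "\<forall>w. (v, w) \<notin> AN"
    show "\<forall>w. (v, w) \<notin> A"
    proof (intro allI notI)
      fix w assume vw: "(v, w) \<in> A"
      then have "w \<in> V" using arcs_V by blast
      then have "(v, if w \<in> D then q1 else w) \<in> AN"
        using v vw AN_iff unique_entry by auto
      then show False using no_AN by blast
    qed
  qed (use AN_iff in blast)
  have "\<forall>w. (q1, w) \<notin> AN"
    using AN_iff fresh by blast
  then have leaf_iff:
    "v \<in> leaves VN AN \<longleftrightarrow> v = q1 \<or> (v \<in> V - D \<and> (\<forall>w. (v, w) \<notin> AN))" for v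
    using outdeg_zero_iff[OF finite_VN AN_VN] unfolding leaves_def N1_verts_def by auto
  show ?thesis
  proof (intro set_eqI)
    fix v
    show "v \<in> leaves VN AN \<longleftrightarrow> v \<in> insert q1 (X - D)"
      using leaf_iff[of v] no_out[of v] X_iff[of v] fresh(1) X_V by blast
  qed
qed

lemma leaves_Q1: "leaves VQ AQ = insert v1 (X \<inter> D)"
proof -
  have "AQ \<subseteq> VQ \<times> VQ"
    using AQ_iff D_arc_closed u1_D unfolding Q1_verts_def by auto
  then have leaf_iff: "v \<in> leaves VQ AQ \<longleftrightarrow> v \<in> VQ \<and> (\<forall>w. (v, w) \<notin> AQ)" for v
    using outdeg_zero_iff[OF finite_VQ] unfolding leaves_def by blast
  have no_out: "(\<forall>w. (v, w) \<notin> AQ) \<longleftrightarrow> (\<forall>w. (v, w) \<notin> A)" if "v \<in> D" for v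
    using that AQ_iff AQ_from_D by blast
  have v1_sink: "\<forall>w. (v1, w) \<notin> AQ" and r1_u1: "(r1, u1) \<in> AQ"
    using AQ_iff D_V fresh by auto
  show ?thesis
  proof (intro set_eqI)
    fix v
    show "v \<in> leaves VQ AQ \<longleftrightarrow> v \<in> insert v1 (X \<inter> D)"
      using leaf_iff[of v] no_out[of v] X_iff[of v] D_V fresh v1_sink r1_u1
      unfolding Q1_verts_def by blast
  qed
qed

end

section \<open>Restricting a labelling of \<open>N\<close> to \<open>N\<^sub>1\<close> and \<open>Q\<^sub>1\<close>\<close>

locale labelling_split = entry_split V A X u1 q1 r1 v1
  for V :: "'v set" and A X u1 q1 r1 v1 +
  fixes Gs :: "'g set" and G :: "'v \<Rightarrow> 'g set" and k :: nat
  assumes finite_Gs: "finite Gs" and G_Gs: "\<And>x. x \<in> X \<Longrightarrow> G x \<subseteq> Gs"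
begin

abbreviation "genes_below \<equiv> \<Union>x \<in> X \<inter> D. G x"
abbreviation "genes_above \<equiv> \<Union>x \<in> X - D. G x"
abbreviation "shared \<equiv> genes_below \<inter> genes_above"
abbreviation "G1 \<equiv> G(q1 := shared, v1 := shared)"

lemma shared_Gs: "shared \<subseteq> Gs"
  using G_Gs by auto

lemma carriers_pass_entry:
  assumes F: "gene_labelling V A Gs G k F" and g: "g \<in> Gs"
    and w: "w \<in> carriers V F g - D" and z: "z \<in> carriers V F g \<inter> D"
  shows "u1 \<in> carriers V F g \<and>
    (u1, z) \<in> (A \<inter> (carriers V F g \<inter> D) \<times> (carriers V F g \<inter> D))\<^sup>*"
proof -
  define W where "W = carriers V F g"
  obtain \<rho> where \<rho>: "induced_root W A \<rho>"
    using labelling_root[OF F finite_V g] w unfolding W_def by blast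
  then have "(\<rho>, w) \<in> A\<^sup>*" and \<rho>_z: "(\<rho>, z) \<in> (A \<inter> W \<times> W)\<^sup>*"
    using w z rtrancl_mono[of "A \<inter> W \<times> W" A] unfolding induced_root_def W_def by blast+
  then have "\<rho> \<notin> D"
    using D_closed w by blast
  have "\<And>a b. (a, b) \<in> A \<inter> W \<times> W \<Longrightarrow> a \<notin> D \<Longrightarrow> b \<in> D \<Longrightarrow> b = u1"
    "\<And>a b. (a, b) \<in> A \<inter> W \<times> W \<Longrightarrow> a \<in> D \<Longrightarrow> b \<in> D"
    using unique_entry D_arc_closed by blast+
  then obtain a where "(a, u1) \<in> A \<inter> W \<times> W" "(u1, z) \<in> (A \<inter> W \<times> W \<inter> D \<times> D)\<^sup>*"
    using path_through_entrance[OF \<rho>_z \<open>\<rho> \<notin> D\<close>] z by blast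
  moreover have "A \<inter> W \<times> W \<inter> D \<times> D = A \<inter> (W \<inter> D) \<times> (W \<inter> D)"
    by blast
  ultimately show ?thesis
    unfolding W_def by auto
qed

lemma shared_at_entry:
  assumes F: "gene_labelling V A Gs G k F"
  shows "shared \<subseteq> F u1"
proof
  fix g assume g: "g \<in> shared"
  then obtain x0 x1 where "x0 \<in> X \<inter> D" "g \<in> G x0" "x1 \<in> X - D" "g \<in> G x1"
    by blast
  then have "x0 \<in> carriers V F g \<inter> D" "x1 \<in> carriers V F g - D"
    using leaf_carrier[OF F] leaves_X by auto
  then show "g \<in> F u1"
    using carriers_pass_entry[OF F] g shared_Gs unfolding carriers_def by blast
qed

lemma card_shared:
  assumes F: "gene_labelling V A Gs G k F"
  shows "card shared \<le> k"
proof -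
  have "F u1 \<subseteq> Gs" "card (F u1) \<le> k"
    using F u1_V unfolding gene_labelling_def by auto
  then show ?thesis
    using shared_at_entry[OF F] finite_Gs by (meson card_mono finite_subset le_trans)
qed

text \<open>A root of the carriers of \<open>g\<close> in \<open>N\<close> lies above \<open>u1\<close> and remains a root; it reaches \<open>q1\<close>
  through the last vertex above \<open>u1\<close> on its path down to a leaf below \<open>u1\<close>.\<close>
lemma restrict_N1_root:
  assumes F: "gene_labelling V A Gs G k F" and g: "g \<in> Gs"
    and ne: "carriers VN (F(q1 := shared)) g \<noteq> {}"
  shows "\<exists>\<rho>. induced_root (carriers VN (F(q1 := shared)) g) AN \<rho>"
proof -
  define W where "W = carriers V F g"
  define W1 where "W1 = carriers VN (F(q1 := shared)) g"
  have W1_eq: "W1 = (W - D) \<union> (if g \<in> shared then {q1} else {})"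
    using fresh(1) unfolding W1_def W_def carriers_def N1_verts_def by auto
  have "W - D \<noteq> {}"
  proof (cases "g \<in> shared")
    case True
    then obtain x1 where "x1 \<in> X - D" "g \<in> G x1" by blast
    then have "x1 \<in> W - D" using leaf_carrier[OF F] leaves_X unfolding W_def by auto
    then show ?thesis by blast
  next
    case False
    then show ?thesis using ne W1_eq unfolding W1_def by auto
  qed
  then obtain w where w: "w \<in> W - D" by blast
  obtain \<rho> where \<rho>: "induced_root W A \<rho>"
    using labelling_root[OF F finite_V g] w unfolding W_def by blast
  then have "(\<rho>, w) \<in> A\<^sup>*"
    using w rtrancl_mono[of "A \<inter> W \<times> W" A] unfolding induced_root_def by blast
  then have \<rho>_above: "\<rho> \<in> W - D"
    using \<rho> D_closed w unfolding induced_root_def by blast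
  have W_V: "W \<subseteq> V" unfolding W_def carriers_def by auto
  have reach_above: "(\<rho>, v) \<in> (AN \<inter> W1 \<times> W1)\<^sup>*" if v: "v \<in> W - D" for v
  proof -
    have "z \<in> W - D" if "(z, v) \<in> (A \<inter> W \<times> W)\<^sup>*" for z
      using induced_rtrancl_source[OF that] v D_closed rtrancl_mono[of "A \<inter> W \<times> W" A] that
      by blast
    then have "(\<rho>, v) \<in> (A \<inter> W \<times> W \<inter> (W - D) \<times> (W - D))\<^sup>*"
      using \<rho> v rtrancl_restrict_ancestors[of \<rho> v "A \<inter> W \<times> W" "W - D"]
      unfolding induced_root_def by blast
    moreover have "A \<inter> W \<times> W \<inter> (W - D) \<times> (W - D) \<subseteq> AN \<inter> W1 \<times> W1"
      using AN_restrict_above[of "W - D"] W_V W1_eq by blast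
    ultimately show ?thesis
      using rtrancl_mono by blast
  qed
  have reach_q1: "(\<rho>, q1) \<in> (AN \<inter> W1 \<times> W1)\<^sup>*" if gS: "g \<in> shared"
  proof -
    obtain x0 where "x0 \<in> X \<inter> D" "g \<in> G x0" using gS by blast
    then have "x0 \<in> W \<inter> D" using leaf_carrier[OF F] leaves_X unfolding W_def by auto
    then have "(\<rho>, x0) \<in> (A \<inter> W \<times> W)\<^sup>*" "x0 \<in> D"
      using \<rho> unfolding induced_root_def by blast+
    moreover have "\<And>a b. (a, b) \<in> A \<inter> W \<times> W \<Longrightarrow> a \<notin> D \<Longrightarrow> b \<in> D \<Longrightarrow> b = u1"
      "\<And>a b. (a, b) \<in> A \<inter> W \<times> W \<Longrightarrow> a \<in> D \<Longrightarrow> b \<in> D"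
      using unique_entry D_arc_closed by blast+
    ultimately obtain a where "(a, u1) \<in> A \<inter> W \<times> W" "a \<notin> D"
      using path_through_entrance[of \<rho> x0 "A \<inter> W \<times> W" D u1] \<rho>_above by blast
    then have "a \<in> W - D" "(a, q1) \<in> AN \<inter> W1 \<times> W1"
      using AN_iff W_V W1_eq gS by auto
    then show ?thesis
      using reach_above by (meson rtrancl.rtrancl_into_rtrancl)
  qed
  have "induced_root W1 AN \<rho>"
    unfolding induced_root_def
  proof (intro conjI allI ballI notI)
    show "\<rho> \<in> W1" using \<rho>_above W1_eq by auto
  next
    fix x assume "(x, \<rho>) \<in> AN \<inter> W1 \<times> W1"
    then have "(x, \<rho>) \<in> A \<inter> W \<times> W"
      using AN_iff \<rho>_above W1_eq fresh(1) W_V by (auto split: if_splits)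
    then show False using \<rho> unfolding induced_root_def by blast
  next
    fix v assume "v \<in> W1"
    then show "(\<rho>, v) \<in> (AN \<inter> W1 \<times> W1)\<^sup>*"
      using reach_above reach_q1 W1_eq by (auto split: if_splits)
  qed
  then show ?thesis unfolding W1_def by blast
qed

text \<open>A shared gene is rooted at \<open>r1\<close>, any other gene carried on both sides of \<open>u1\<close> is
  rooted at \<open>u1\<close>, and a gene carried only below \<open>u1\<close> keeps its root.\<close>
lemma restrict_Q1_root:
  assumes F: "gene_labelling V A Gs G k F" and g: "g \<in> Gs"
    and ne: "carriers VQ (F(r1 := shared, v1 := shared)) g \<noteq> {}"
  shows "\<exists>\<rho>. induced_root (carriers VQ (F(r1 := shared, v1 := shared)) g) AQ \<rho>"
proof -
  define W where "W = carriers V F g"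
  define W2 where "W2 = carriers VQ (F(r1 := shared, v1 := shared)) g"
  have W2_eq: "W2 = (W \<inter> D) \<union> (if g \<in> shared then {r1, v1} else {})"
    using fresh D_V unfolding W2_def W_def carriers_def Q1_verts_def by auto
  have below: "A \<inter> (W \<inter> D) \<times> (W \<inter> D) \<subseteq> AQ \<inter> W2 \<times> W2"
    using AQ_restrict_below[of "W \<inter> D"] W2_eq by blast
  have shared_above: "W - D \<noteq> {}" if gS: "g \<in> shared"
  proof -
    obtain x1 where "x1 \<in> X - D" "g \<in> G x1" using gS by blast
    then have "x1 \<in> W - D" using leaf_carrier[OF F] leaves_X unfolding W_def by auto
    then show ?thesis by blast
  qed
  have from_u1: "u1 \<in> W \<and> (u1, z) \<in> (AQ \<inter> W2 \<times> W2)\<^sup>*" if "W - D \<noteq> {}" "z \<in> W \<inter> D" for z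
    using carriers_pass_entry[OF F g, of _ z] that rtrancl_mono[OF below] unfolding W_def by blast
  consider "g \<in> shared" | "g \<notin> shared" "W - D \<noteq> {}" | "W \<subseteq> D"
    by blast
  then have "\<exists>\<rho>. induced_root W2 AQ \<rho>"
  proof cases
    case 1
    then have r1_v1: "r1 \<in> W2" "v1 \<in> W2" using W2_eq by auto
    have "(r1, v) \<in> (AQ \<inter> W2 \<times> W2)\<^sup>*" if "v \<in> W2" for v
    proof (cases "v \<in> D")
      case True
      then have "v \<in> W \<inter> D" using that W2_eq D_V fresh by (auto split: if_splits)
      then have "u1 \<in> W" "(u1, v) \<in> (AQ \<inter> W2 \<times> W2)\<^sup>*"
        using from_u1[OF shared_above[OF 1]] by blast+
      then have "u1 \<in> W2" "(u1, v) \<in> (AQ \<inter> W2 \<times> W2)\<^sup>*"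
        using W2_eq u1_D by auto
      moreover have "(r1, u1) \<in> AQ" using AQ_iff by blast
      ultimately show ?thesis
        using r1_v1 by (meson IntI SigmaI converse_rtrancl_into_rtrancl)
    next
      case False
      then have "v = r1 \<or> v = v1" using that W2_eq by (auto split: if_splits)
      then show ?thesis using r1_v1 AQ_iff by auto
    qed
    moreover have "(x, r1) \<notin> AQ" for x
      using AQ_iff D_V arcs_V fresh u1_V by blast
    ultimately show ?thesis
      using r1_v1 unfolding induced_root_def by blast
  next
    case 2
    then have W2_below: "W2 = W \<inter> D" using W2_eq by auto
    then obtain z where "z \<in> W \<inter> D" using ne unfolding W2_def by blast
    then have "u1 \<in> W2" using from_u1 2 W2_below u1_D by blast
    moreover have "(x, u1) \<notin> AQ \<inter> W2 \<times> W2" for x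
      using AQ_from_D no_arc_to_u1_from_D W2_below by blast
    ultimately show ?thesis
      using from_u1 2 W2_below unfolding induced_root_def by blast
  next
    case 3
    then have "W2 = W" using W2_eq shared_above by auto
    then obtain \<rho> where "induced_root W A \<rho>"
      using labelling_root[OF F finite_V g] ne unfolding W2_def W_def by blast
    moreover have "AQ \<inter> W \<times> W = A \<inter> W \<times> W"
      using AQ_restrict_below 3 by blast
    ultimately show ?thesis
      using \<open>W2 = W\<close> unfolding induced_root_def by auto
  qed
  then show ?thesis unfolding W2_def .
qed

lemma restriction_labellings:
  assumes F: "gene_labelling V A Gs G k F"
  shows "gene_labelling VN AN Gs G1 k (F(q1 := shared))"
    and "gene_labelling VQ AQ Gs G1 k (F(r1 := shared, v1 := shared))"
proof -
  have lab: "\<forall>v\<in>V. F v \<subseteq> Gs" "\<forall>x\<in>X. F x = G x" "\<forall>v\<in>V. card (F v) \<le> k"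
    using F leaves_X unfolding gene_labelling_def by auto
  have G1_X: "G1 x = G x" "x \<noteq> q1" "x \<noteq> r1" "x \<noteq> v1" if "x \<in> X" for x
    using that X_V fresh by auto
  show "gene_labelling VN AN Gs G1 k (F(q1 := shared))"
    unfolding gene_labelling_iff[OF finite_VN] leaves_N1
  proof (intro conjI ballI impI)
    fix v assume "v \<in> VN"
    then show "(F(q1 := shared)) v \<subseteq> Gs" "card ((F(q1 := shared)) v) \<le> k"
      using lab(1,3) shared_Gs card_shared[OF F] unfolding N1_verts_def by auto
  next
    fix x assume "x \<in> insert q1 (X - D)"
    then show "(F(q1 := shared)) x = G1 x"
      using G1_X lab(2) by (cases "x = q1") auto
  qed (rule restrict_N1_root[OF F])
  show "gene_labelling VQ AQ Gs G1 k (F(r1 := shared, v1 := shared))"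
    unfolding gene_labelling_iff[OF finite_VQ] leaves_Q1
  proof (intro conjI ballI impI)
    fix v assume "v \<in> VQ"
    then show "(F(r1 := shared, v1 := shared)) v \<subseteq> Gs"
      "card ((F(r1 := shared, v1 := shared)) v) \<le> k"
      using lab(1,3) shared_Gs card_shared[OF F] D_V unfolding Q1_verts_def by auto
  next
    fix x assume "x \<in> insert v1 (X \<inter> D)"
    then show "(F(r1 := shared, v1 := shared)) x = G1 x"
      using G1_X lab(2) by (cases "x = v1") auto
  qed (rule restrict_Q1_root[OF F])
qed

end

section \<open>Gluing labellings of \<open>N\<^sub>1\<close> and \<open>Q\<^sub>1\<close> into a labelling of \<open>N\<close>\<close>

locale glue_split = labelling_split V A X u1 q1 r1 v1 Gs G k
  for V :: "'v set" and A X u1 q1 r1 v1 and Gs :: "'g set" and G k +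
  fixes F1 F2 :: "'v \<Rightarrow> 'g set"
  assumes lab_N1: "gene_labelling VN AN Gs G1 k F1"
    and lab_Q1: "gene_labelling VQ AQ Gs G1 k F2"
begin

definition glued :: "'v \<Rightarrow> 'g set" where
  "glued v = (if v \<in> D then F2 v \<inter> genes_below else F1 v - (genes_below - genes_above))"

lemma F1_q1: "F1 q1 = shared"
  and F1_leaf: "x \<in> X - D \<Longrightarrow> F1 x = G x"
  using lab_N1 leaves_N1 X_V fresh unfolding gene_labelling_def by auto

lemma F2_v1: "F2 v1 = shared"
  and F2_leaf: "x \<in> X \<inter> D \<Longrightarrow> F2 x = G x"
  using lab_Q1 leaves_Q1 X_V fresh unfolding gene_labelling_def by auto

lemma glued_below:
  "carriers V glued g \<inter> D = (if g \<in> genes_below then carriers VQ F2 g \<inter> D else {})"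
  unfolding carriers_def glued_def Q1_verts_def using D_V by auto

lemma glued_above:
  "carriers V glued g - D = (if g \<in> genes_below - genes_above then {} else carriers VN F1 g - {q1})"
  unfolding carriers_def glued_def N1_verts_def using fresh(1) by auto

lemma Q1_pass_entry:
  assumes \<rho>: "induced_root (carriers VQ F2 g) AQ \<rho>" "\<rho> \<notin> D"
    and z: "z \<in> carriers VQ F2 g \<inter> D"
  shows "u1 \<in> carriers VQ F2 g \<and>
    (u1, z) \<in> (A \<inter> (carriers VQ F2 g \<inter> D) \<times> (carriers VQ F2 g \<inter> D))\<^sup>*"
proof -
  define W2 where "W2 = carriers VQ F2 g"
  have "\<And>a b. (a, b) \<in> AQ \<inter> W2 \<times> W2 \<Longrightarrow> a \<notin> D \<Longrightarrow> b \<in> D \<Longrightarrow> b = u1"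
    "\<And>a b. (a, b) \<in> AQ \<inter> W2 \<times> W2 \<Longrightarrow> a \<in> D \<Longrightarrow> b \<in> D"
    using AQ_iff AQ_from_D D_V fresh by blast+
  moreover have "(\<rho>, z) \<in> (AQ \<inter> W2 \<times> W2)\<^sup>*"
    using \<rho>(1) z unfolding induced_root_def W2_def by blast
  ultimately obtain a where "(a, u1) \<in> AQ \<inter> W2 \<times> W2" "(u1, z) \<in> (AQ \<inter> W2 \<times> W2 \<inter> D \<times> D)\<^sup>*"
    using path_through_entrance[of \<rho> z "AQ \<inter> W2 \<times> W2" D u1] \<rho>(2) z by blast
  moreover have "AQ \<inter> W2 \<times> W2 \<inter> D \<times> D = A \<inter> (W2 \<inter> D) \<times> (W2 \<inter> D)"
    using AQ_restrict_below[of "W2 \<inter> D"] by blast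
  ultimately show ?thesis
    unfolding W2_def by auto
qed

text \<open>In \<open>N\<^sub>1\<close>, the leaf \<open>q1\<close> is never an ancestor of another carrier, so the carriers other
  than \<open>q1\<close> are reached from the root through carriers of \<open>N\<close>.\<close>
lemma N1_reach_above:
  assumes \<rho>: "induced_root (carriers VN F1 g) AN \<rho>" and v: "v \<in> carriers VN F1 g - {q1}"
  shows "(\<rho>, v) \<in> (A \<inter> (carriers VN F1 g - {q1}) \<times> (carriers VN F1 g - {q1}))\<^sup>*"
proof -
  define W1 where "W1 = carriers VN F1 g"
  have "z \<in> W1 - {q1}" if "(z, v) \<in> (AN \<inter> W1 \<times> W1)\<^sup>*" for z
  proof -
    have "z \<noteq> q1"
      using that v AN_iff fresh(1) by (auto elim: converse_rtranclE)
    then show ?thesis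
      using induced_rtrancl_source[OF that] v unfolding W1_def by blast
  qed
  then have "(\<rho>, v) \<in> (AN \<inter> W1 \<times> W1 \<inter> (W1 - {q1}) \<times> (W1 - {q1}))\<^sup>*"
    using \<rho> v rtrancl_restrict_ancestors[of \<rho> v "AN \<inter> W1 \<times> W1" "W1 - {q1}"]
    unfolding induced_root_def W1_def by blast
  moreover have "W1 - {q1} \<subseteq> V - D"
    unfolding W1_def carriers_def N1_verts_def by auto
  then have "AN \<inter> W1 \<times> W1 \<inter> (W1 - {q1}) \<times> (W1 - {q1}) = A \<inter> (W1 - {q1}) \<times> (W1 - {q1})"
    using AN_restrict_above[of "W1 - {q1}"] by blast
  ultimately show ?thesis
    unfolding W1_def by simp
qed

text \<open>A gene not occurring at leaves below \<open>u1\<close> keeps its carriers and root from \<open>N\<^sub>1\<close>.\<close>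
lemma glued_root_above:
  assumes g: "g \<in> Gs" "g \<notin> genes_below" and ne: "carriers V glued g \<noteq> {}"
  shows "\<exists>\<rho>. induced_root (carriers V glued g) A \<rho>"
proof -
  define W1 where "W1 = carriers VN F1 g"
  have "q1 \<notin> W1" using F1_q1 g(2) unfolding W1_def carriers_def by auto
  moreover have "carriers V glued g \<inter> D = {}" "carriers V glued g - D = W1 - {q1}"
    using glued_below[of g] glued_above[of g] g(2) unfolding W1_def by simp_all
  ultimately have W: "carriers V glued g = W1"
    by blast
  moreover have "W1 \<subseteq> V - D"
    using \<open>q1 \<notin> W1\<close> unfolding W1_def carriers_def N1_verts_def by auto
  then have "AN \<inter> W1 \<times> W1 = A \<inter> W1 \<times> W1"
    by (rule AN_restrict_above)
  moreover obtain \<rho> where "induced_root W1 AN \<rho>"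
    using labelling_root[OF lab_N1 finite_VN g(1)] ne W unfolding W1_def by blast
  ultimately show ?thesis
    unfolding induced_root_def by auto
qed

text \<open>A gene occurring at leaves below but not above \<open>u1\<close> is carried only below \<open>u1\<close>; its root in
  \<open>Q\<^sub>1\<close> is kept if it lies below \<open>u1\<close>, and is replaced by \<open>u1\<close> otherwise.\<close>
lemma glued_root_below:
  assumes g: "g \<in> Gs" "g \<in> genes_below - genes_above" and ne: "carriers V glued g \<noteq> {}"
  shows "\<exists>\<rho>. induced_root (carriers V glued g) A \<rho>"
proof -
  define W2 where "W2 = carriers VQ F2 g"
  have "carriers V glued g \<inter> D = W2 \<inter> D" "carriers V glued g - D = {}"
    using glued_below[of g] glued_above[of g] g(2) unfolding W2_def by simp_all
  then have W: "carriers V glued g = W2 \<inter> D"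
    by blast
  obtain \<rho> where \<rho>: "induced_root W2 AQ \<rho>"
    using labelling_root[OF lab_Q1 finite_VQ g(1)] ne W unfolding W2_def by blast
  have AQ_W: "AQ \<inter> W2 \<times> W2 \<inter> D \<times> D = A \<inter> (W2 \<inter> D) \<times> (W2 \<inter> D)"
    using AQ_restrict_below[of "W2 \<inter> D"] by blast
  show ?thesis
  proof (cases "\<rho> \<in> D")
    case True
    have "(\<rho>, v) \<in> (A \<inter> (W2 \<inter> D) \<times> (W2 \<inter> D))\<^sup>*" if "v \<in> W2" for v
      using rtrancl_restrict_closed[of \<rho> v "AQ \<inter> W2 \<times> W2" D] \<rho> that True AQ_from_D AQ_W
      unfolding induced_root_def by auto
    then have "induced_root (W2 \<inter> D) A \<rho>"
      using \<rho> True AQ_W unfolding induced_root_def by blast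
    then show ?thesis using W by auto
  next
    case False
    obtain z where "z \<in> W2 \<inter> D" using ne W by blast
    then have "u1 \<in> W2 \<inter> D"
      using Q1_pass_entry[OF \<rho>[unfolded W2_def] False] u1_D unfolding W2_def by blast
    moreover have "(x, u1) \<notin> A \<inter> (W2 \<inter> D) \<times> (W2 \<inter> D)" for x
      using no_arc_to_u1_from_D by blast
    ultimately have "induced_root (W2 \<inter> D) A u1"
      using Q1_pass_entry[OF \<rho>[unfolded W2_def] False] unfolding induced_root_def W2_def by blast
    then show ?thesis using W by auto
  qed
qed

lemma shared_root_above:
  assumes g: "g \<in> Gs" "g \<in> shared"
  obtains \<rho> p where "induced_root (carriers VN F1 g) AN \<rho>" "\<rho> \<noteq> q1"
    "p \<in> carriers VN F1 g - {q1}" "(p, u1) \<in> A"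
proof -
  define W1 where "W1 = carriers VN F1 g"
  have q1_W1: "q1 \<in> W1"
    using F1_q1 g(2) unfolding W1_def carriers_def N1_verts_def by auto
  obtain x1 where "x1 \<in> X - D" "g \<in> G x1" using g(2) by blast
  then have x1: "x1 \<in> W1" "x1 \<noteq> q1"
    using F1_leaf X_V fresh(1) unfolding W1_def carriers_def N1_verts_def by auto
  obtain \<rho> where \<rho>: "induced_root W1 AN \<rho>"
    using labelling_root[OF lab_N1 finite_VN g(1)] q1_W1 unfolding W1_def by blast
  have q1_sink: "(q1, w) \<notin> AN" for w
    using AN_iff fresh(1) by blast
  have "(\<rho>, x1) \<in> (AN \<inter> W1 \<times> W1)\<^sup>*"
    using \<rho> x1(1) unfolding induced_root_def by blast
  then have "\<rho> \<noteq> q1"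
    using x1(2) q1_sink by (auto elim: converse_rtranclE)
  moreover have "(\<rho>, q1) \<in> (AN \<inter> W1 \<times> W1)\<^sup>*"
    using \<rho> q1_W1 unfolding induced_root_def by blast
  ultimately obtain p where "(p, q1) \<in> AN \<inter> W1 \<times> W1"
    by (metis rtranclE)
  then have "p \<in> W1 - {q1}" "(p, u1) \<in> A"
    using AN_iff fresh(1) by auto
  with \<rho> \<open>\<rho> \<noteq> q1\<close> show thesis
    using that unfolding W1_def by blast
qed

text \<open>For a shared gene, \<open>u1\<close> carries it in \<open>Q\<^sub>1\<close> and reaches all its carriers below \<open>u1\<close>:
  the root of its carriers in \<open>Q\<^sub>1\<close> reaches the leaf \<open>v1\<close>, so it is not below \<open>u1\<close>.\<close>
lemma shared_entry_below:
  assumes g: "g \<in> Gs" "g \<in> shared" and z: "z \<in> carriers VQ F2 g \<inter> D"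
  shows "u1 \<in> carriers VQ F2 g \<and>
    (u1, z) \<in> (A \<inter> (carriers VQ F2 g \<inter> D) \<times> (carriers VQ F2 g \<inter> D))\<^sup>*"
proof -
  define W2 where "W2 = carriers VQ F2 g"
  have v1_W2: "v1 \<in> W2"
    using F2_v1 g(2) unfolding W2_def carriers_def Q1_verts_def by auto
  obtain \<rho> where \<rho>: "induced_root W2 AQ \<rho>"
    using labelling_root[OF lab_Q1 finite_VQ g(1)] v1_W2 unfolding W2_def by blast
  have "\<rho> \<notin> D"
  proof
    assume "\<rho> \<in> D"
    moreover have "(\<rho>, v1) \<in> (AQ \<inter> W2 \<times> W2)\<^sup>*"
      using \<rho> v1_W2 unfolding induced_root_def by blast
    ultimately have "v1 \<in> D"
      using rtrancl_restrict_closed[of \<rho> v1 "AQ \<inter> W2 \<times> W2" D] AQ_from_D by blast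
    then show False using D_V fresh(3) by blast
  qed
  then show ?thesis
    using Q1_pass_entry \<rho> z unfolding W2_def by blast
qed

text \<open>A shared gene is rooted at the root of its carriers in \<open>N\<^sub>1\<close>, which reaches the carriers
  below \<open>u1\<close> through the parent \<open>p\<close> of \<open>u1\<close>.\<close>
lemma glued_root_shared:
  assumes g: "g \<in> Gs" "g \<in> shared"
  shows "\<exists>\<rho>. induced_root (carriers V glued g) A \<rho>"
proof -
  define W where "W = carriers V glued g"
  have W_below: "W \<inter> D = carriers VQ F2 g \<inter> D" and W_above: "W - D = carriers VN F1 g - {q1}"
    using glued_below[of g] glued_above[of g] g(2) unfolding W_def by auto
  obtain \<rho> p where \<rho>: "induced_root (carriers VN F1 g) AN \<rho>" "\<rho> \<noteq> q1"
    and p: "p \<in> carriers VN F1 g - {q1}" "(p, u1) \<in> A"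
    using shared_root_above[OF g] by blast
  have \<rho>_above: "\<rho> \<in> W - D"
    using \<rho> W_above unfolding induced_root_def by blast
  have mono_W: "(A \<inter> S \<times> S)\<^sup>* \<subseteq> (A \<inter> W \<times> W)\<^sup>*" if "S \<subseteq> W" for S
    using that by (intro rtrancl_mono) blast
  have reach_above: "(\<rho>, v) \<in> (A \<inter> W \<times> W)\<^sup>*" if "v \<in> W - D" for v
  proof -
    have "(\<rho>, v) \<in> (A \<inter> (W - D) \<times> (W - D))\<^sup>*"
      using N1_reach_above[OF \<rho>(1)] that W_above by simp
    then show ?thesis using mono_W[of "W - D"] by blast
  qed
  obtain x0 where "x0 \<in> X \<inter> D" "g \<in> G x0" using g(2) by blast
  then have "x0 \<in> carriers VQ F2 g \<inter> D"
    using F2_leaf D_V unfolding carriers_def Q1_verts_def by auto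
  then have u1_W: "u1 \<in> W"
    using shared_entry_below[OF g] W_below u1_D by blast
  have reach_below: "(u1, v) \<in> (A \<inter> W \<times> W)\<^sup>*" if "v \<in> W \<inter> D" for v
  proof -
    have "(u1, v) \<in> (A \<inter> (W \<inter> D) \<times> (W \<inter> D))\<^sup>*"
      using shared_entry_below[OF g, of v] that W_below by simp
    then show ?thesis using mono_W[of "W \<inter> D"] by blast
  qed
  have "(\<rho>, u1) \<in> (A \<inter> W \<times> W)\<^sup>*"
    using reach_above[of p] p W_above u1_W by (blast intro: rtrancl_into_rtrancl)
  then have "(\<rho>, v) \<in> (A \<inter> W \<times> W)\<^sup>*" if "v \<in> W" for v
    using reach_above reach_below that by (cases "v \<in> D") (blast intro: rtrancl_trans)+
  moreover have "(x, \<rho>) \<notin> A \<inter> W \<times> W" for x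
  proof
    assume x: "(x, \<rho>) \<in> A \<inter> W \<times> W"
    then have "x \<in> carriers VN F1 g - {q1}"
      using \<rho>_above D_arc_closed W_above by blast
    then have "(x, \<rho>) \<in> AN \<inter> carriers VN F1 g \<times> carriers VN F1 g"
      using x \<rho>_above W_above AN_restrict_above[of "carriers VN F1 g - {q1}"]
      unfolding carriers_def N1_verts_def by blast
    then show False using \<rho>(1) unfolding induced_root_def by blast
  qed
  ultimately show ?thesis
    using \<rho>_above unfolding induced_root_def W_def by blast
qed

lemma glued_labelling: "gene_labelling V A Gs G k glued"
  unfolding gene_labelling_iff[OF finite_V] leaves_X[symmetric]
proof (intro conjI ballI impI)
  fix v assume v: "v \<in> V"
  have "F1 v \<subseteq> Gs \<and> card (F1 v) \<le> k" if "v \<notin> D"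
    using lab_N1 v that unfolding gene_labelling_def N1_verts_def by auto
  moreover have "F2 v \<subseteq> Gs \<and> card (F2 v) \<le> k" if "v \<in> D"
    using lab_Q1 that unfolding gene_labelling_def Q1_verts_def by auto
  ultimately have "\<exists>L. glued v \<subseteq> L \<and> L \<subseteq> Gs \<and> card L \<le> k"
    unfolding glued_def by (cases "v \<in> D") auto
  then show "glued v \<subseteq> Gs" "card (glued v) \<le> k"
    using finite_Gs by (meson card_mono finite_subset le_trans order_trans)+
next
  fix x assume "x \<in> X"
  then show "glued x = G x"
    using F1_leaf F2_leaf unfolding glued_def by auto
next
  fix g assume "g \<in> Gs" "carriers V glued g \<noteq> {}"
  then show "\<exists>\<rho>. induced_root (carriers V glued g) A \<rho>"
    using glued_root_above glued_root_below glued_root_shared by blast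
qed

end

context labelling_split
begin

theorem labelling_decomposition:
  "admits_labelling V A Gs G k \<longleftrightarrow>
    admits_labelling VN AN Gs G1 k \<and> admits_labelling VQ AQ Gs G1 k"
proof
  assume "admits_labelling V A Gs G k"
  then obtain F where "gene_labelling V A Gs G k F"
    unfolding admits_labelling_def by blast
  then show "admits_labelling VN AN Gs G1 k \<and> admits_labelling VQ AQ Gs G1 k"
    using restriction_labellings unfolding admits_labelling_def by blast
next
  assume "admits_labelling VN AN Gs G1 k \<and> admits_labelling VQ AQ Gs G1 k"
  then obtain F1 F2 where "gene_labelling VN AN Gs G1 k F1" "gene_labelling VQ AQ Gs G1 k F2"
    unfolding admits_labelling_def by blast
  then interpret glue_split V A X u1 q1 r1 v1 Gs G k F1 F2
    by (intro glue_split.intro glue_split_axioms.intro labelling_split.intro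
        labelling_split_axioms entry_split_axioms)
  show "admits_labelling V A Gs G k"
    using glued_labelling unfolding admits_labelling_def by blast
qed

end

text \<open>Lemma 5.4: the lowest gall vertex of a galled tree has a unique entrance, so the
  decomposition applies; the leaves of \<open>Q\<^sub>1\<close> other than \<open>v1\<close> are the leaves of \<open>N\<close> below \<open>u1\<close>, so
  \<open>S\<close> is the set of shared genes.\<close>
theorem lemma5p4:
  fixes V :: "'v set" and A :: "('v \<times> 'v) set" and X :: "'v set"
    and Gs :: "'g set" and G :: "'v \<Rightarrow> 'g set" and k :: nat
    and u1 q1 r1 v1 :: 'v
  assumes "galled_tree V A X"
    and "two_galls A"
    and "finite Gs"
    and "\<forall>x\<in>X. G x \<subseteq> Gs"
    and "k > 0"
    and "lowest_gall_vertex V A u1"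
    and "q1 \<notin> V" and "r1 \<notin> V" and "v1 \<notin> V" and "r1 \<noteq> v1"
  shows "let VN1 = N1_verts V A u1 q1; AN1 = N1_arcs V A u1 q1;
             VQ1 = Q1_verts A u1 r1 v1; AQ1 = Q1_arcs A u1 r1 v1;
             S = (\<Union>x \<in> leaves VQ1 AQ1 - {v1}. G x) \<inter> (\<Union>x \<in> X - leaves VQ1 AQ1. G x);
             G' = G(q1 := S, v1 := S)
         in admits_labelling V A Gs G k \<longleftrightarrow>
            (admits_labelling VN1 AN1 Gs G' k \<and> admits_labelling VQ1 AQ1 Gs G' k)"
proof -
  interpret labelling_split V A X u1 q1 r1 v1 Gs G k
  proof
    show "finite V" "A \<subseteq> V \<times> V" "acyclic A" "X = leaves V A"
      using assms(1) unfolding galled_tree_def phylo_network_def digraph_def by blast+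
    show "u1 \<in> V"
      using assms(6) unfolding lowest_gall_vertex_def by blast
    show "\<And>p w. (p, w) \<in> A \<Longrightarrow> p \<notin> desc A u1 \<Longrightarrow> w \<in> desc A u1 \<Longrightarrow> w = u1"
      using lowest_gall_vertex_unique_entry[OF assms(1,6)] .
  qed (use assms in auto)
  have "leaves VQ AQ - {v1} = X \<inter> D" "X - leaves VQ AQ = X - D"
    using leaves_Q1 X_V fresh(3) by auto
  then show ?thesis
    unfolding Let_def using labelling_decomposition by simp
qed

end
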